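(* Let $A$ be a symmetric general metric space and let $\bar A$ be its Cauchy completion: the general metric space whose points are the closed (equivalently, minimal) Cauchy filters on $A$, with $\bar A(\varphi,\psi)=\lim^-_{y\in\psi}\lim^+_{x\in\varphi}A(x,y)$. Then the $\mathcal P_1$-completion of $A$, i.e. the general metric space whose points are the closed weakly flat filters on $A$ with distance $d(\mathcal F_1,\mathcal F_2)=\lim^+_{x\in\mathcal F_1}\lim^-_{y\in\mathcal F_2}A(x,y)$, is isomorphic to the general metric space whose points are the nonempty closed subsets of $\bar A$ (for the topology of the symmetric pseudometric $\bar A$) with distance $d(X,Y)=\sup_{\varphi\in X}\inf_{\psi\in Y}\bar A(\varphi,\psi)$; the isomorphism sends a closed weakly flat filter $\mathcal F$ to the set of closed Cauchy filters containing $\mathcal F$.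
   Context: A general metric space $A$ is a set with $A(-,-):A\times A\to[0,\infty]$, $A(x,x)=0$, $A(x,z)\le A(x,y)+A(y,z)$; symmetric means $A(x,y)=A(y,x)$. A filter on $A$ is a nonempty set of nonempty subsets closed under finite intersections and supersets; $\lim^+_{\mathcal F}t=\inf_{f\in\mathcal F}\sup_{x\in f}t(x)$, $\lim^-_{\mathcal F}t=\sup_{f\in\mathcal F}\inf_{x\in f}t(x)$ ($\inf\emptyset=\infty$, $\sup\emptyset=0$); $M^-(\mathcal F)(x)=\lim^-_{y\in\mathcal F}A(x,y)$. Cauchy: $\inf_f\sup_{x,y\in f}A(x,y)=0$. Weakly flat: $\lim^+_{\mathcal F}M^-(\mathcal F)=0$. A weakly flat filter $\mathcal F$ is closed iff for every $f\in\mathcal F$ there is $\epsilon>0$ with $\{x:M^-(\mathcal F)(x)\le\epsilon\}\subseteq f$. Two general metric spaces are isomorphic if there is a bijection preserving distances. *)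

theory Defs
  imports "HOL-Library.Extended_Nonnegative_Real"
begin

text \<open>Distances take values in [0,\<infinity>], modelled by ennreal (inf of empty = top, sup of empty = 0).
  The underlying set of a general metric space is the whole type 'a.\<close>

definition gen_metric :: "('a \<Rightarrow> 'a \<Rightarrow> ennreal) \<Rightarrow> bool" where
  "gen_metric A \<longleftrightarrow> (\<forall>x. A x x = 0) \<and> (\<forall>x y z. A x z \<le> A x y + A y z)"

definition symmetric_gm :: "('a \<Rightarrow> 'a \<Rightarrow> ennreal) \<Rightarrow> bool" where
  "symmetric_gm A \<longleftrightarrow> (\<forall>x y. A x y = A y x)"

definition is_filt :: "'a set set \<Rightarrow> bool" where
  "is_filt F \<longleftrightarrow> F \<noteq> {} \<and> (\<forall>f\<in>F. f \<noteq> {})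
     \<and> (\<forall>f\<in>F. \<forall>g\<in>F. f \<inter> g \<in> F) \<and> (\<forall>f\<in>F. \<forall>g. f \<subseteq> g \<longrightarrow> g \<in> F)"

definition limsup_F :: "'a set set \<Rightarrow> ('a \<Rightarrow> ennreal) \<Rightarrow> ennreal" where
  "limsup_F F t = (INF f\<in>F. SUP x\<in>f. t x)"

definition liminf_F :: "'a set set \<Rightarrow> ('a \<Rightarrow> ennreal) \<Rightarrow> ennreal" where
  "liminf_F F t = (SUP f\<in>F. INF x\<in>f. t x)"

definition Mminus :: "('a \<Rightarrow> 'a \<Rightarrow> ennreal) \<Rightarrow> 'a set set \<Rightarrow> 'a \<Rightarrow> ennreal" where
  "Mminus A F x = liminf_F F (\<lambda>y. A x y)"

definition cauchy_filt :: "('a \<Rightarrow> 'a \<Rightarrow> ennreal) \<Rightarrow> 'a set set \<Rightarrow> bool" where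
  "cauchy_filt A F \<longleftrightarrow> (INF f\<in>F. SUP x\<in>f. SUP y\<in>f. A x y) = 0"

definition weakly_flat :: "('a \<Rightarrow> 'a \<Rightarrow> ennreal) \<Rightarrow> 'a set set \<Rightarrow> bool" where
  "weakly_flat A F \<longleftrightarrow> limsup_F F (Mminus A F) = 0"

definition closed_filt :: "('a \<Rightarrow> 'a \<Rightarrow> ennreal) \<Rightarrow> 'a set set \<Rightarrow> bool" where
  "closed_filt A F \<longleftrightarrow> weakly_flat A F \<and>
     (\<forall>f\<in>F. \<exists>\<epsilon>::real. \<epsilon> > 0 \<and> {x. Mminus A F x \<le> ennreal \<epsilon>} \<subseteq> f)"

definition cauchy_pts :: "('a \<Rightarrow> 'a \<Rightarrow> ennreal) \<Rightarrow> 'a set set set" where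
  "cauchy_pts A = {\<phi>. is_filt \<phi> \<and> cauchy_filt A \<phi> \<and> closed_filt A \<phi>}"

definition Abar :: "('a \<Rightarrow> 'a \<Rightarrow> ennreal) \<Rightarrow> 'a set set \<Rightarrow> 'a set set \<Rightarrow> ennreal" where
  "Abar A \<phi> \<psi> = liminf_F \<psi> (\<lambda>y. limsup_F \<phi> (\<lambda>x. A x y))"

definition P1_pts :: "('a \<Rightarrow> 'a \<Rightarrow> ennreal) \<Rightarrow> 'a set set set" where
  "P1_pts A = {F. is_filt F \<and> weakly_flat A F \<and> closed_filt A F}"

definition P1_dist :: "('a \<Rightarrow> 'a \<Rightarrow> ennreal) \<Rightarrow> 'a set set \<Rightarrow> 'a set set \<Rightarrow> ennreal" where
  "P1_dist A F1 F2 = limsup_F F1 (\<lambda>x. liminf_F F2 (\<lambda>y. A x y))"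

text \<open>Closed subsets of the completion w.r.t. the topology of the (symmetric) pseudometric Abar:
  X contains every point at distance 0 from X (open balls {\<psi>. Abar \<phi> \<psi> < r}).\<close>
definition closed_in_bar :: "('a \<Rightarrow> 'a \<Rightarrow> ennreal) \<Rightarrow> 'a set set set \<Rightarrow> bool" where
  "closed_in_bar A X \<longleftrightarrow> X \<subseteq> cauchy_pts A \<and>
     (\<forall>\<phi>\<in>cauchy_pts A. (\<forall>r>0. \<exists>\<psi>\<in>X. Abar A \<phi> \<psi> < r) \<longrightarrow> \<phi> \<in> X)"

definition closed_subsets_bar :: "('a \<Rightarrow> 'a \<Rightarrow> ennreal) \<Rightarrow> 'a set set set set" where
  "closed_subsets_bar A = {X. X \<noteq> {} \<and> closed_in_bar A X}"

definition haus_dist :: "('a \<Rightarrow> 'a \<Rightarrow> ennreal) \<Rightarrow> 'a set set set \<Rightarrow> 'a set set set \<Rightarrow> ennreal" where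
  "haus_dist A X Y = (SUP \<phi>\<in>X. INF \<psi>\<in>Y. Abar A \<phi> \<psi>)"

definition iso_map :: "('a \<Rightarrow> 'a \<Rightarrow> ennreal) \<Rightarrow> 'a set set \<Rightarrow> 'a set set set" where
  "iso_map A F = {\<phi>\<in>cauchy_pts A. F \<subseteq> \<phi>}"

end

theory Submission
  imports Defs
begin

text \<open>
  The basic device is the neighbourhood nbhd A c F of a filter: x lies in it iff every member
  of F contains a point within distance c of x, so it is squeezed between the sublevel sets
  {M^-(F) < c} and {M^-(F) \<le> c}.  A filter is weakly flat iff it contains all its neighbourhoods,
  and closed iff they form a base of it.

  The key lemma is an approximation property: if x lies in the c-neighbourhood of a closed
  weakly flat filter F, then for every d > 0 some closed Cauchy filter \<phi> \<supseteq> F has x in its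
  (c + d)-neighbourhood.  \<phi> is generated by balls around a chain x_0, x_1, ... with x_n in the
  d/2^(n+1)-neighbourhood of F and consecutive points closer than d/2^(n+1).  Hence F is
  recovered from its closed Cauchy refinements (injectivity), the set of these refinements is
  closed in the completion, and the two distances agree up to an arbitrarily small error.
  Conversely, a nonempty closed set X of Cauchy points is the image of the filter generated by
  the uniform neighbourhoods \<Union>\<phi>\<in>X. nbhd A e \<phi>, e > 0.
\<close>

definition nbhd :: "('a \<Rightarrow> 'a \<Rightarrow> ennreal) \<Rightarrow> ennreal \<Rightarrow> 'a set set \<Rightarrow> 'a set" where
  "nbhd A c F = {x. \<forall>g\<in>F. \<exists>y\<in>g. A x y < c}"

lemma Mminus_less_imp_nbhd:
  assumes "Mminus A F x < c" shows "x \<in> nbhd A c F"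
  unfolding nbhd_def
proof (intro CollectI ballI)
  fix g assume "g \<in> F"
  then have "(INF y\<in>g. A x y) \<le> Mminus A F x"
    unfolding Mminus_def liminf_F_def by (rule SUP_upper)
  then have "(INF y\<in>g. A x y) < c" using assms by (rule le_less_trans)
  then show "\<exists>y\<in>g. A x y < c" by (simp add: INF_less_iff)
qed

lemma nbhd_imp_Mminus_le:
  assumes "x \<in> nbhd A c F" shows "Mminus A F x \<le> c"
  unfolding Mminus_def liminf_F_def
proof (rule SUP_least)
  fix g assume "g \<in> F"
  then obtain y where "y \<in> g" "A x y < c" using assms by (auto simp: nbhd_def)
  then show "(INF y\<in>g. A x y) \<le> c" by (simp add: INF_lower2 less_imp_le)
qed

lemma nbhd_mono: "c \<le> c' \<Longrightarrow> F' \<subseteq> F \<Longrightarrow> nbhd A c F \<subseteq> nbhd A c' F'"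
  unfolding nbhd_def by (fastforce intro: less_le_trans)

lemma is_filt_upward: "is_filt F \<Longrightarrow> f \<in> F \<Longrightarrow> f \<subseteq> g \<Longrightarrow> g \<in> F"
  unfolding is_filt_def by blast

lemma is_filt_Int: "is_filt F \<Longrightarrow> f \<in> F \<Longrightarrow> g \<in> F \<Longrightarrow> f \<inter> g \<in> F"
  unfolding is_filt_def by blast

lemma is_filt_ex_mem: "is_filt F \<Longrightarrow> f \<in> F \<Longrightarrow> \<exists>x. x \<in> f"
  unfolding is_filt_def by blast

definition filt_of_base :: "('i \<Rightarrow> 'a set) \<Rightarrow> 'i set \<Rightarrow> 'a set set" where
  "filt_of_base B I = {h. \<exists>i\<in>I. B i \<subseteq> h}"

lemma filt_of_base_iff: "h \<in> filt_of_base B I \<longleftrightarrow> (\<exists>i\<in>I. B i \<subseteq> h)"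
  by (simp add: filt_of_base_def)

lemma base_in_filt_of_base: "i \<in> I \<Longrightarrow> B i \<in> filt_of_base B I"
  by (auto simp: filt_of_base_def)

lemma is_filt_filt_of_base:
  assumes "I \<noteq> {}" and "\<And>i. i \<in> I \<Longrightarrow> B i \<noteq> {}"
    and "\<And>i j. i \<in> I \<Longrightarrow> j \<in> I \<Longrightarrow> \<exists>k\<in>I. B k \<subseteq> B i \<inter> B j"
  shows "is_filt (filt_of_base B I)"
  unfolding is_filt_def
proof (intro conjI ballI allI impI)
  obtain i where "i \<in> I" using assms(1) by blast
  then have "B i \<in> filt_of_base B I" by (rule base_in_filt_of_base)
  then show "filt_of_base B I \<noteq> {}" by blast
next
  fix f assume "f \<in> filt_of_base B I"
  then show "f \<noteq> {}" using assms(2) by (force simp: filt_of_base_iff)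
next
  fix f g assume "f \<in> filt_of_base B I" "g \<in> filt_of_base B I"
  then obtain i j where "i \<in> I" "j \<in> I" "B i \<subseteq> f" "B j \<subseteq> g" by (auto simp: filt_of_base_iff)
  then obtain k where "k \<in> I" "B k \<subseteq> f \<inter> g" using assms(3)[of i j] by blast
  then show "f \<inter> g \<in> filt_of_base B I" unfolding filt_of_base_iff by blast
next
  fix f g assume "f \<in> filt_of_base B I" "f \<subseteq> g"
  then show "g \<in> filt_of_base B I" by (auto simp: filt_of_base_iff)
qed

lemma nbhd_filt_of_base: "x \<in> nbhd A c (filt_of_base B I) \<longleftrightarrow> (\<forall>i\<in>I. \<exists>y\<in>B i. A x y < c)"
proof
  assume "x \<in> nbhd A c (filt_of_base B I)"
  then show "\<forall>i\<in>I. \<exists>y\<in>B i. A x y < c" by (simp add: nbhd_def base_in_filt_of_base)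
next
  assume "\<forall>i\<in>I. \<exists>y\<in>B i. A x y < c"
  then show "x \<in> nbhd A c (filt_of_base B I)" by (fastforce simp: nbhd_def filt_of_base_iff)
qed

lemma weakly_flat_iff_nbhd:
  assumes "is_filt F"
  shows "weakly_flat A F \<longleftrightarrow> (\<forall>e>0. nbhd A (ennreal e) F \<in> F)"
proof
  assume "weakly_flat A F"
  show "\<forall>e>0. nbhd A (ennreal e) F \<in> F"
  proof (intro allI impI)
    fix e :: real assume "0 < e"
    with \<open>weakly_flat A F\<close> have "limsup_F F (Mminus A F) < ennreal e"
      by (simp add: weakly_flat_def)
    then obtain f where f: "f \<in> F" "(SUP x\<in>f. Mminus A F x) < ennreal e"
      unfolding limsup_F_def by (auto simp: INF_less_iff)
    then have "f \<subseteq> nbhd A (ennreal e) F"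
      by (auto intro!: Mminus_less_imp_nbhd dest: le_less_trans[OF SUP_upper])
    with f(1) assms show "nbhd A (ennreal e) F \<in> F" by (blast intro: is_filt_upward)
  qed
next
  assume nbhd_mem: "\<forall>e>0. nbhd A (ennreal e) F \<in> F"
  have small: "limsup_F F (Mminus A F) \<le> ennreal e" if "0 < e" for e
    unfolding limsup_F_def using nbhd_mem that
    by (intro INF_lower2[of "nbhd A (ennreal e) F"]) (auto intro!: SUP_least nbhd_imp_Mminus_le)
  have "limsup_F F (Mminus A F) \<le> 0"
    by (rule ennreal_le_epsilon) (simp add: small)
  then show "weakly_flat A F" by (simp add: weakly_flat_def)
qed

lemma closed_filt_iff_nbhd:
  "closed_filt A F \<longleftrightarrow> weakly_flat A F \<and> (\<forall>f\<in>F. \<exists>e>0. nbhd A (ennreal e) F \<subseteq> f)"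
proof -
  have le: "nbhd A (ennreal e) F \<subseteq> {x. Mminus A F x \<le> ennreal e}" for e
    by (auto intro: nbhd_imp_Mminus_le)
  have less: "{x. Mminus A F x \<le> ennreal (e/2)} \<subseteq> nbhd A (ennreal e) F" if "0 < e" for e
  proof
    fix x assume "x \<in> {x. Mminus A F x \<le> ennreal (e/2)}"
    moreover have "ennreal (e/2) < ennreal e" using that by (simp add: ennreal_lessI)
    ultimately show "x \<in> nbhd A (ennreal e) F" by (auto intro: Mminus_less_imp_nbhd le_less_trans)
  qed
  show ?thesis unfolding closed_filt_def
  proof (intro iffI conjI ballI; (elim conjE)?)
    fix f assume "\<forall>f\<in>F. \<exists>\<epsilon>>0. {x. Mminus A F x \<le> ennreal \<epsilon>} \<subseteq> f" "f \<in> F"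
    then show "\<exists>e>0. nbhd A (ennreal e) F \<subseteq> f" using le by blast
  next
    fix f assume "\<forall>f\<in>F. \<exists>e>0. nbhd A (ennreal e) F \<subseteq> f" "f \<in> F"
    then obtain e where "0 < e" "nbhd A (ennreal e) F \<subseteq> f" by blast
    then show "\<exists>\<epsilon>>0. {x. Mminus A F x \<le> ennreal \<epsilon>} \<subseteq> f"
      using less[of e] by (intro exI[of _ "e/2"]) auto
  qed
qed

lemma cauchy_filt_iff:
  "cauchy_filt A F \<longleftrightarrow> (\<forall>e>0. \<exists>h\<in>F. \<forall>x\<in>h. \<forall>y\<in>h. A x y < ennreal e)"
proof
  assume "cauchy_filt A F"
  show "\<forall>e>0. \<exists>h\<in>F. \<forall>x\<in>h. \<forall>y\<in>h. A x y < ennreal e"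
  proof (intro allI impI)
    fix e :: real assume "0 < e"
    with \<open>cauchy_filt A F\<close> have "(INF f\<in>F. SUP x\<in>f. SUP y\<in>f. A x y) < ennreal e"
      by (simp add: cauchy_filt_def)
    then obtain h where h: "h \<in> F" "(SUP x\<in>h. SUP y\<in>h. A x y) < ennreal e"
      by (auto simp: INF_less_iff)
    have "A x y \<le> (SUP x\<in>h. SUP y\<in>h. A x y)" if "x \<in> h" "y \<in> h" for x y
      by (rule SUP_upper2[OF that(1)], rule SUP_upper[OF that(2)])
    with h show "\<exists>h\<in>F. \<forall>x\<in>h. \<forall>y\<in>h. A x y < ennreal e"
      by (blast intro: le_less_trans)
  qed
next
  assume small_sets: "\<forall>e>0. \<exists>h\<in>F. \<forall>x\<in>h. \<forall>y\<in>h. A x y < ennreal e"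
  have small: "(INF f\<in>F. SUP x\<in>f. SUP y\<in>f. A x y) \<le> ennreal e" if "0 < e" for e
  proof -
    obtain h where "h \<in> F" "\<forall>x\<in>h. \<forall>y\<in>h. A x y < ennreal e" using small_sets \<open>0 < e\<close> by blast
    then show ?thesis by (intro INF_lower2[of h] SUP_least) (auto intro: less_imp_le)
  qed
  have "(INF f\<in>F. SUP x\<in>f. SUP y\<in>f. A x y) \<le> 0"
    by (rule ennreal_le_epsilon) (simp add: small)
  then show "cauchy_filt A F" by (simp add: cauchy_filt_def)
qed

lemma cauchy_filt_imp_weakly_flat:
  assumes F: "is_filt F" and "cauchy_filt A F"
  shows "weakly_flat A F"
  unfolding weakly_flat_iff_nbhd[OF F]
proof (intro allI impI)
  fix e :: real assume "0 < e"
  then obtain h where h: "h \<in> F" "\<forall>x\<in>h. \<forall>y\<in>h. A x y < ennreal e"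
    using \<open>cauchy_filt A F\<close> by (auto simp: cauchy_filt_iff)
  have "h \<subseteq> nbhd A (ennreal e) F"
  proof
    fix x assume "x \<in> h"
    have "\<exists>y\<in>g. A x y < ennreal e" if "g \<in> F" for g
      using is_filt_ex_mem[OF F is_filt_Int[OF F that h(1)]] h(2) \<open>x \<in> h\<close> by blast
    then show "x \<in> nbhd A (ennreal e) F" by (simp add: nbhd_def)
  qed
  with h(1) F show "nbhd A (ennreal e) F \<in> F" by (blast intro: is_filt_upward)
qed

lemma P1_pts_iff:
  "F \<in> P1_pts A \<longleftrightarrow> is_filt F \<and> (\<forall>e>0. nbhd A (ennreal e) F \<in> F)
     \<and> (\<forall>g\<in>F. \<exists>e>0. nbhd A (ennreal e) F \<subseteq> g)"
  unfolding P1_pts_def closed_filt_iff_nbhd by (auto simp: weakly_flat_iff_nbhd)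

lemma P1_pts_is_filt: "F \<in> P1_pts A \<Longrightarrow> is_filt F"
  by (simp add: P1_pts_def)

lemma P1_pts_nbhd_mem: "F \<in> P1_pts A \<Longrightarrow> 0 < e \<Longrightarrow> nbhd A (ennreal e) F \<in> F"
  by (simp add: P1_pts_iff)

lemma cauchy_pts_iff:
  "\<phi> \<in> cauchy_pts A \<longleftrightarrow> is_filt \<phi> \<and> cauchy_filt A \<phi> \<and> (\<forall>g\<in>\<phi>. \<exists>e>0. nbhd A (ennreal e) \<phi> \<subseteq> g)"
  unfolding cauchy_pts_def closed_filt_iff_nbhd by (auto intro: cauchy_filt_imp_weakly_flat)

lemma cauchy_pts_subset_P1_pts: "cauchy_pts A \<subseteq> P1_pts A"
  unfolding cauchy_pts_def P1_pts_def closed_filt_def by blast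

lemma P1_pts_subsetI:
  assumes "F \<in> P1_pts A" "is_filt G" "\<And>e. 0 < e \<Longrightarrow> nbhd A (ennreal e) F \<in> G"
  shows "F \<subseteq> G"
proof
  fix g assume "g \<in> F"
  then obtain e where "0 < e" "nbhd A (ennreal e) F \<subseteq> g" using assms(1) by (auto simp: P1_pts_iff)
  then show "g \<in> G" using assms(2,3) by (blast intro: is_filt_upward)
qed

lemma cauchy_filt_centre:
  assumes "is_filt \<phi>" "cauchy_filt A \<phi>" "f \<in> \<phi>" "0 < e"
  shows "\<exists>x\<in>f. \<exists>h\<in>\<phi>. \<forall>u\<in>h. A u x < ennreal e"
proof -
  obtain h where h: "h \<in> \<phi>" "\<forall>u\<in>h. \<forall>v\<in>h. A u v < ennreal e"
    using assms(2,4) by (auto simp: cauchy_filt_iff)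
  then obtain x where "x \<in> h \<inter> f" using assms(1,3) by (meson is_filt_Int is_filt_ex_mem)
  with h show ?thesis by blast
qed

lemma Abar_lessD:
  assumes "Abar A \<phi> \<psi> < c" "h \<in> \<psi>"
  shows "\<exists>w\<in>h. \<exists>k\<in>\<phi>. \<forall>u\<in>k. A u w < c"
proof -
  have "(INF w\<in>h. limsup_F \<phi> (\<lambda>x. A x w)) < c"
    using assms unfolding Abar_def liminf_F_def by (meson SUP_upper le_less_trans)
  then obtain w where "w \<in> h" "limsup_F \<phi> (\<lambda>x. A x w) < c" by (auto simp: INF_less_iff)
  moreover from this obtain k where "k \<in> \<phi>" "(SUP u\<in>k. A u w) < c"
    unfolding limsup_F_def by (auto simp: INF_less_iff)
  moreover from this have "\<forall>u\<in>k. A u w < c" by (auto intro: le_less_trans[OF SUP_upper])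
  ultimately show ?thesis by blast
qed

lemma Abar_leI:
  assumes "\<And>h. h \<in> \<psi> \<Longrightarrow> \<exists>w\<in>h. \<exists>k\<in>\<phi>. \<forall>u\<in>k. A u w \<le> c"
  shows "Abar A \<phi> \<psi> \<le> c"
  unfolding Abar_def liminf_F_def limsup_F_def
proof (rule SUP_least)
  fix h assume "h \<in> \<psi>"
  then obtain w k where "w \<in> h" "k \<in> \<phi>" "\<forall>u\<in>k. A u w \<le> c" using assms by blast
  then have "(SUP u\<in>k. A u w) \<le> c" by (simp add: SUP_least)
  then show "(INF w\<in>h. INF k\<in>\<phi>. SUP u\<in>k. A u w) \<le> c"
    using \<open>w \<in> h\<close> \<open>k \<in> \<phi>\<close> by (blast intro: INF_lower2)
qed

lemma P1_dist_eq_limsup_Mminus: "P1_dist A F1 F2 = limsup_F F1 (Mminus A F2)"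
  by (simp add: P1_dist_def Mminus_def[abs_def])

lemma ennreal_ex_pos_less: "0 < (r::ennreal) \<Longrightarrow> \<exists>e>0. ennreal e < r"
  by (metis dense ennreal_0 ennreal_cases less_eq_real_def order_less_asym')

lemma ennreal_less_add_pos: "x < top \<Longrightarrow> 0 < e \<Longrightarrow> x < x + ennreal e"
  using ennreal_add_left_cancel_less[of x 0 "ennreal e"] by simp

lemma ex_div_power2_less: "0 < (\<epsilon>::real) \<Longrightarrow> \<exists>n. c / 2^n < \<epsilon>"
proof -
  assume "0 < \<epsilon>"
  obtain n where "c / \<epsilon> < 2^n" using real_arch_pow[of 2 "c / \<epsilon>"] by auto
  with \<open>0 < \<epsilon>\<close> have "c / 2^n < \<epsilon>" by (simp add: field_simps)
  then show ?thesis ..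
qed

lemma div_power2_le_half:
  assumes "0 \<le> (d::real)" "n < m" shows "d / 2^m \<le> d / 2^n / 2"
proof -
  have "(2::real) ^ Suc n \<le> 2 ^ m" using assms(2) by (intro power_increasing) auto
  then have "d / 2^m \<le> d / 2 ^ Suc n" using assms(1) by (intro divide_left_mono) auto
  then show ?thesis by simp
qed

lemma nbhd_chain_exists:
  assumes nbhd_mem: "\<And>n. nbhd A (r n) F \<in> F" and x: "x \<in> nbhd A (r 0) F"
  shows "\<exists>s. s 0 = x \<and> (\<forall>n. s n \<in> nbhd A (r n) F) \<and> (\<forall>n. A (s n) (s (Suc n)) < r n)"
proof -
  have "\<exists>s. \<forall>n. (s n \<in> nbhd A (r n) F \<and> (n = 0 \<longrightarrow> s n = x)) \<and> A (s n) (s (Suc n)) < r n"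
  proof (rule dependent_nat_choice)
    show "\<exists>y. y \<in> nbhd A (r 0) F \<and> (0 = (0::nat) \<longrightarrow> y = x)" using x by blast
  next
    fix y n assume "y \<in> nbhd A (r n) F \<and> (n = 0 \<longrightarrow> y = x)"
    then obtain z where "z \<in> nbhd A (r (Suc n)) F" "A y z < r n"
      using nbhd_mem[of "Suc n"] by (auto simp: nbhd_def)
    then show "\<exists>z. (z \<in> nbhd A (r (Suc n)) F \<and> (Suc n = 0 \<longrightarrow> z = x)) \<and> A y z < r n" by blast
  qed
  then show ?thesis by metis
qed

definition nbhd_filt :: "('a \<Rightarrow> 'a \<Rightarrow> ennreal) \<Rightarrow> 'a set set set \<Rightarrow> 'a set set" where
  "nbhd_filt A X = filt_of_base (\<lambda>e. \<Union>\<phi>\<in>X. nbhd A (ennreal e) \<phi>) {e. 0 < e}"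

locale sym_gen_metric =
  fixes A :: "'a \<Rightarrow> 'a \<Rightarrow> ennreal"
  assumes dist_self [simp]: "A x x = 0"
    and triangle: "A x z \<le> A x y + A y z"
    and commute: "A x y = A y x"

lemma sym_gen_metricI: "gen_metric A \<Longrightarrow> symmetric_gm A \<Longrightarrow> sym_gen_metric A"
  unfolding gen_metric_def symmetric_gm_def sym_gen_metric_def by blast

context sym_gen_metric
begin

lemma triangle_less: "A x y < a \<Longrightarrow> A y z < b \<Longrightarrow> A x z < a + b"
  using triangle[of x z y] by (meson add_strict_mono le_less_trans)

lemma nbhd_trans:
  assumes "A x z < a" "z \<in> nbhd A b F" shows "x \<in> nbhd A (a + b) F"
  unfolding nbhd_def
proof (intro CollectI ballI)
  fix g assume "g \<in> F"
  then obtain y where "y \<in> g" "A z y < b" using assms(2) by (auto simp: nbhd_def)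
  then show "\<exists>y\<in>g. A x y < a + b" using triangle_less[OF assms(1)] by blast
qed

lemma nbhd_Abar_trans:
  assumes "x \<in> nbhd A a \<phi>" "Abar A \<phi> \<psi> < b" shows "x \<in> nbhd A (a + b) \<psi>"
  unfolding nbhd_def
proof (intro CollectI ballI)
  fix h assume "h \<in> \<psi>"
  then obtain w k where wk: "w \<in> h" "k \<in> \<phi>" "\<forall>u\<in>k. A u w < b"
    using assms(2) Abar_lessD by blast
  obtain u where u: "u \<in> k" "A x u < a" using wk(2) assms(1) by (auto simp: nbhd_def)
  show "\<exists>w\<in>h. A x w < a + b" using triangle_less[OF u(2)] wk u(1) by blast
qed

lemma Abar_le_via_point:
  assumes "h \<in> \<phi>" "\<forall>u\<in>h. A u x < a" "x \<in> nbhd A b \<psi>"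
  shows "Abar A \<phi> \<psi> \<le> a + b"
proof (rule Abar_leI)
  fix k assume "k \<in> \<psi>"
  then obtain w where "w \<in> k" "A x w < b" using assms(3) by (auto simp: nbhd_def)
  moreover have "A u w \<le> a + b" if "u \<in> h" for u
    using triangle_less[of u x a w b] assms(2) that \<open>A x w < b\<close> by simp
  ultimately show "\<exists>w\<in>k. \<exists>h\<in>\<phi>. \<forall>u\<in>h. A u w \<le> a + b" using assms(1) by blast
qed

context
  fixes s :: "nat \<Rightarrow> 'a" and d :: real
  assumes d: "0 < d" and step: "\<And>n. A (s n) (s (Suc n)) < ennreal (d / 2^n)"
begin

lemma geometric_chain_dist:
  assumes "n \<le> m"
  shows "A (s n) (s m) < ennreal (2 * d / 2^n)"
proof -
  have partial: "A (s n) (s (n + j)) \<le> ennreal (2 * d / 2^n - 2 * d / 2^(n + j))" for j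
  proof (induction j)
    case 0
    show ?case by simp
  next
    case (Suc j)
    have "2 * d / 2^(n + j) \<le> 2 * d / 2^n"
      using d by (intro divide_left_mono power_increasing) auto
    then have nonneg: "0 \<le> 2 * d / 2^n - 2 * d / 2^(n + j)" by simp
    have "A (s n) (s (n + Suc j)) \<le> A (s n) (s (n + j)) + A (s (n + j)) (s (Suc (n + j)))"
      using triangle by simp
    also have "\<dots> \<le> ennreal (2 * d / 2^n - 2 * d / 2^(n + j)) + ennreal (d / 2^(n + j))"
      using Suc.IH step[of "n + j"] by (intro add_mono) simp_all
    also have "\<dots> = ennreal (2 * d / 2^n - 2 * d / 2^(n + j) + d / 2^(n + j))"
      using nonneg d by (intro ennreal_plus[symmetric]) auto
    also have "2 * d / 2^n - 2 * d / 2^(n + j) + d / 2^(n + j) = 2 * d / 2^n - 2 * d / 2^(n + Suc j)"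
      by simp
    finally show ?case .
  qed
  obtain j where "m = n + j" using \<open>n \<le> m\<close> le_iff_add by blast
  then have "A (s n) (s m) \<le> ennreal (2 * d / 2^n - 2 * d / 2^m)" using partial by simp
  also have "\<dots> < ennreal (2 * d / 2^n)" using d by (intro ennreal_lessI) auto
  finally show ?thesis .
qed

lemma geometric_chain_balls_antimono:
  assumes "n \<le> m"
  shows "{y. A (s m) y < ennreal (4 * d / 2^m)} \<subseteq> {y. A (s n) y < ennreal (4 * d / 2^n)}"
proof (cases "n = m")
  case False
  with \<open>n \<le> m\<close> have "4 * d / 2^m \<le> 4 * d / 2^n / 2"
    using d by (intro div_power2_le_half) auto
  then have small: "2 * d / 2^n + 4 * d / 2^m \<le> 4 * d / 2^n" by simp
  show ?thesis
  proof
    fix y assume "y \<in> {y. A (s m) y < ennreal (4 * d / 2^m)}"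
    then have "A (s n) y < ennreal (2 * d / 2^n) + ennreal (4 * d / 2^m)"
      using triangle_less geometric_chain_dist[OF \<open>n \<le> m\<close>] by simp
    also have "\<dots> = ennreal (2 * d / 2^n + 4 * d / 2^m)"
      using d by (intro ennreal_plus[symmetric]) auto
    also have "\<dots> \<le> ennreal (4 * d / 2^n)" using small by (rule ennreal_leI)
    finally show "y \<in> {y. A (s n) y < ennreal (4 * d / 2^n)}" by simp
  qed
qed simp

lemma geometric_chain_cauchy_pt:
  shows "filt_of_base (\<lambda>n. {y. A (s n) y < ennreal (4 * d / 2^n)}) UNIV \<in> cauchy_pts A"
    (is "filt_of_base ?B UNIV \<in> _")
proof -
  let ?\<phi> = "filt_of_base ?B UNIV"
  have filt: "is_filt ?\<phi>"
  proof (rule is_filt_filt_of_base)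
    fix i
    have "s i \<in> ?B i" using d by simp
    then show "?B i \<noteq> {}" by blast
    fix j
    show "\<exists>k\<in>UNIV. ?B k \<subseteq> ?B i \<inter> ?B j"
      using geometric_chain_balls_antimono[of i "max i j"]
        geometric_chain_balls_antimono[of j "max i j"] by auto
  qed simp
  have "cauchy_filt A ?\<phi>"
    unfolding cauchy_filt_iff
  proof (intro allI impI)
    fix \<epsilon> :: real assume "0 < \<epsilon>"
    then obtain n where n: "8 * d / 2^n < \<epsilon>" using ex_div_power2_less by blast
    have "A u v < ennreal \<epsilon>" if "u \<in> ?B n" "v \<in> ?B n" for u v
    proof -
      have "A u v < ennreal (4 * d / 2^n) + ennreal (4 * d / 2^n)"
        using that triangle_less[of u "s n"] commute[of u] by simp
      also have "\<dots> = ennreal (8 * d / 2^n)"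
        using d by (subst ennreal_plus[symmetric]) auto
      also have "\<dots> < ennreal \<epsilon>" using n \<open>0 < \<epsilon>\<close> by (intro ennreal_lessI)
      finally show ?thesis .
    qed
    then show "\<exists>h\<in>?\<phi>. \<forall>u\<in>h. \<forall>v\<in>h. A u v < ennreal \<epsilon>"
      using base_in_filt_of_base[of n UNIV ?B] by blast
  qed
  moreover have "\<exists>e>0. nbhd A (ennreal e) ?\<phi> \<subseteq> h" if h: "h \<in> ?\<phi>" for h
  proof -
    obtain n where "?B n \<subseteq> h" using h unfolding filt_of_base_iff by blast
    have "nbhd A (ennreal (d / 2^n)) ?\<phi> \<subseteq> ?B n"
    proof
      fix y assume "y \<in> nbhd A (ennreal (d / 2^n)) ?\<phi>"
      then obtain z where z: "A (s (Suc n)) z < ennreal (4 * d / 2^Suc n)" "A y z < ennreal (d / 2^n)"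
        unfolding nbhd_filt_of_base by blast
      have "A (s n) y < ennreal (d / 2^n) + ennreal (4 * d / 2^Suc n) + ennreal (d / 2^n)"
        using triangle_less[OF triangle_less[OF step z(1)]] z(2) commute[of y] by simp
      also have "\<dots> = ennreal (4 * d / 2^n)"
        using d by (simp flip: ennreal_plus)
      finally show "y \<in> ?B n" by simp
    qed
    with \<open>?B n \<subseteq> h\<close> d show ?thesis by (intro exI[of _ "d / 2^n"]) auto
  qed
  ultimately show ?thesis using filt by (simp add: cauchy_pts_iff)
qed

end

lemma ex_cauchy_refinement_nbhd:
  assumes F: "F \<in> P1_pts A" and x: "x \<in> nbhd A c F" and d: "0 < d"
  shows "\<exists>\<phi>\<in>iso_map A F. x \<in> nbhd A (c + ennreal d) \<phi>"
proof -
  note nbhd_mem = P1_pts_nbhd_mem[OF F]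
  obtain x0 where x0: "x0 \<in> nbhd A (ennreal (d / 2 / 2^0)) F" "A x x0 < c"
    using x nbhd_mem[of "d / 2 / 2^0"] d by (auto simp: nbhd_def)
  have "nbhd A (ennreal (d / 2 / 2^n)) F \<in> F" for n using nbhd_mem d by simp
  then obtain s where "s 0 = x0" and sF: "\<And>n. s n \<in> nbhd A (ennreal (d / 2 / 2^n)) F"
    and step: "\<And>n. A (s n) (s (Suc n)) < ennreal (d / 2 / 2^n)"
    using nbhd_chain_exists[where r="\<lambda>n. ennreal (d / 2 / 2^n)", OF _ x0(1)] by blast
  define B where "B n = {y. A (s n) y < ennreal (4 * (d / 2) / 2^n)}" for n
  have \<phi>: "filt_of_base B UNIV \<in> cauchy_pts A"
    unfolding B_def using geometric_chain_cauchy_pt[where d="d / 2" and s=s] d step by simp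
  have "F \<subseteq> filt_of_base B UNIV"
  proof (rule P1_pts_subsetI[OF F])
    show "is_filt (filt_of_base B UNIV)" using \<phi> by (simp add: cauchy_pts_iff)
    fix \<epsilon> :: real assume "0 < \<epsilon>"
    then obtain n where n: "5 * (d / 2) / 2^n < \<epsilon>" using ex_div_power2_less by blast
    have "B n \<subseteq> nbhd A (ennreal \<epsilon>) F"
    proof
      fix y assume "y \<in> B n"
      then have "y \<in> nbhd A (ennreal (4 * (d / 2) / 2^n) + ennreal (d / 2 / 2^n)) F"
        using nbhd_trans[OF _ sF[of n]] commute[of y] by (simp add: B_def)
      also have "\<dots> \<subseteq> nbhd A (ennreal \<epsilon>) F"
        using n d by (intro nbhd_mono) (simp_all flip: ennreal_plus add: ennreal_leI)
      finally show "y \<in> nbhd A (ennreal \<epsilon>) F" .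
    qed
    then show "nbhd A (ennreal \<epsilon>) F \<in> filt_of_base B UNIV" by (auto simp: filt_of_base_iff)
  qed
  moreover have "x \<in> nbhd A (c + ennreal d) (filt_of_base B UNIV)"
    unfolding nbhd_filt_of_base
  proof
    fix n
    have "A x (s n) < c + ennreal (2 * (d / 2) / 2^0)"
      using triangle_less[OF x0(2)] geometric_chain_dist[where d="d / 2" and s=s and n=0 and m=n]
        \<open>s 0 = x0\<close> d step by simp
    moreover have "s n \<in> B n" using d by (simp add: B_def)
    ultimately show "\<exists>y\<in>B n. A x y < c + ennreal d" by auto
  qed
  ultimately show ?thesis using \<phi> by (auto simp: iso_map_def)
qed

lemma iso_map_nonempty:
  assumes F: "F \<in> P1_pts A" shows "iso_map A F \<noteq> {}"
proof -
  obtain x where "x \<in> nbhd A (ennreal 1) F"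
    using is_filt_ex_mem[OF P1_pts_is_filt[OF F] P1_pts_nbhd_mem[OF F zero_less_one]] by blast
  then show ?thesis using ex_cauchy_refinement_nbhd[OF F, of x _ 1] by auto
qed

lemma closed_in_bar_iso_map:
  assumes F: "F \<in> P1_pts A" shows "closed_in_bar A (iso_map A F)"
  unfolding closed_in_bar_def
proof (intro conjI ballI impI)
  show "iso_map A F \<subseteq> cauchy_pts A" by (auto simp: iso_map_def)
next
  fix \<phi> assume \<phi>: "\<phi> \<in> cauchy_pts A" and near: "\<forall>r>0. \<exists>\<psi>\<in>iso_map A F. Abar A \<phi> \<psi> < r"
  then have \<phi>_P1: "\<phi> \<in> P1_pts A" using cauchy_pts_subset_P1_pts by blast
  have "F \<subseteq> \<phi>"
  proof (rule P1_pts_subsetI[OF F P1_pts_is_filt[OF \<phi>_P1]])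
    fix \<epsilon> :: real assume "0 < \<epsilon>"
    then have "0 < ennreal (\<epsilon> / 2)" by simp
    then obtain \<psi> where \<psi>: "\<psi> \<in> iso_map A F" "Abar A \<phi> \<psi> < ennreal (\<epsilon> / 2)" using near by blast
    have "nbhd A (ennreal (\<epsilon> / 2)) \<phi> \<subseteq> nbhd A (ennreal \<epsilon>) F"
    proof
      fix y assume "y \<in> nbhd A (ennreal (\<epsilon> / 2)) \<phi>"
      then have "y \<in> nbhd A (ennreal (\<epsilon> / 2) + ennreal (\<epsilon> / 2)) \<psi>" using \<psi>(2) by (rule nbhd_Abar_trans)
      also have "\<dots> \<subseteq> nbhd A (ennreal \<epsilon>) F"
        using \<psi>(1) \<open>0 < \<epsilon>\<close> by (intro nbhd_mono) (auto simp: iso_map_def simp flip: ennreal_plus)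
      finally show "y \<in> nbhd A (ennreal \<epsilon>) F" .
    qed
    moreover have "nbhd A (ennreal (\<epsilon> / 2)) \<phi> \<in> \<phi>"
      using \<open>0 < \<epsilon>\<close> by (intro P1_pts_nbhd_mem[OF \<phi>_P1]) simp
    ultimately show "nbhd A (ennreal \<epsilon>) F \<in> \<phi>"
      using is_filt_upward[OF P1_pts_is_filt[OF \<phi>_P1]] by blast
  qed
  with \<phi> show "\<phi> \<in> iso_map A F" by (simp add: iso_map_def)
qed

lemma iso_map_subset_imp_subset:
  assumes F1: "F1 \<in> P1_pts A" and F2: "F2 \<in> P1_pts A" and sub: "iso_map A F2 \<subseteq> iso_map A F1"
  shows "F1 \<subseteq> F2"
proof (rule P1_pts_subsetI[OF F1 P1_pts_is_filt[OF F2]])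
  fix \<epsilon> :: real assume "0 < \<epsilon>"
  have "nbhd A (ennreal (\<epsilon> / 2)) F2 \<subseteq> nbhd A (ennreal \<epsilon>) F1"
  proof
    fix x assume "x \<in> nbhd A (ennreal (\<epsilon> / 2)) F2"
    then obtain \<phi> where \<phi>: "\<phi> \<in> iso_map A F2" "x \<in> nbhd A (ennreal (\<epsilon> / 2) + ennreal (\<epsilon> / 2)) \<phi>"
      using ex_cauchy_refinement_nbhd[OF F2, of x _ "\<epsilon> / 2"] \<open>0 < \<epsilon>\<close> by auto
    have "F1 \<subseteq> \<phi>" using \<phi>(1) sub by (auto simp: iso_map_def)
    with \<phi>(2) \<open>0 < \<epsilon>\<close> show "x \<in> nbhd A (ennreal \<epsilon>) F1"
      using nbhd_mono[of _ "ennreal \<epsilon>" F1 \<phi>] by (auto simp flip: ennreal_plus)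
  qed
  moreover have "nbhd A (ennreal (\<epsilon> / 2)) F2 \<in> F2"
    using \<open>0 < \<epsilon>\<close> by (intro P1_pts_nbhd_mem[OF F2]) simp
  ultimately show "nbhd A (ennreal \<epsilon>) F1 \<in> F2"
    using is_filt_upward[OF P1_pts_is_filt[OF F2]] by blast
qed

lemma inj_on_iso_map: "inj_on (iso_map A) (P1_pts A)"
proof (rule inj_onI)
  fix F1 F2 assume "F1 \<in> P1_pts A" "F2 \<in> P1_pts A" "iso_map A F1 = iso_map A F2"
  then show "F1 = F2" using iso_map_subset_imp_subset by (metis subset_antisym order_refl)
qed

lemma nbhd_filt_in_P1_pts:
  assumes "X \<noteq> {}" and X: "X \<subseteq> P1_pts A"
  shows "nbhd_filt A X \<in> P1_pts A"
proof -
  define U where "U e = (\<Union>\<phi>\<in>X. nbhd A (ennreal e) \<phi>)" for e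
  have F_def: "nbhd_filt A X = filt_of_base U {e. 0 < e}" by (simp add: nbhd_filt_def U_def[abs_def])
  have U_mono: "U e \<subseteq> U e'" if "e \<le> e'" for e e'
    unfolding U_def using that by (auto dest: nbhd_mono[OF ennreal_leI subset_refl, THEN subsetD])
  have filt: "is_filt (nbhd_filt A X)"
    unfolding F_def
  proof (rule is_filt_filt_of_base)
    show "{e::real. 0 < e} \<noteq> {}" by (auto intro: exI[of _ 1])
  next
    fix e :: real assume "e \<in> {e. 0 < e}"
    obtain \<phi> where "\<phi> \<in> X" using \<open>X \<noteq> {}\<close> by blast
    then have \<phi>: "\<phi> \<in> P1_pts A" using X by blast
    have "nbhd A (ennreal e) \<phi> \<in> \<phi>" using P1_pts_nbhd_mem[OF \<phi>] \<open>e \<in> {e. 0 < e}\<close> by simp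
    then obtain x where "x \<in> nbhd A (ennreal e) \<phi>" using is_filt_ex_mem[OF P1_pts_is_filt[OF \<phi>]] by blast
    with \<open>\<phi> \<in> X\<close> show "U e \<noteq> {}" by (auto simp: U_def)
  next
    fix e e' :: real assume "e \<in> {e. 0 < e}" "e' \<in> {e. 0 < e}"
    then show "\<exists>k\<in>{e. 0 < e}. U k \<subseteq> U e \<inter> U e'"
      using U_mono[of "min e e'" e] U_mono[of "min e e'" e'] by (intro bexI[of _ "min e e'"]) auto
  qed
  have "U e \<subseteq> nbhd A (ennreal e) (nbhd_filt A X)" for e
  proof
    fix x assume "x \<in> U e"
    then obtain \<phi> where \<phi>: "\<phi> \<in> X" "x \<in> nbhd A (ennreal e) \<phi>" by (auto simp: U_def)
    have "\<exists>y\<in>U e'. A x y < ennreal e" if "0 < e'" for e'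
    proof -
      have "nbhd A (ennreal e') \<phi> \<in> \<phi>" using X \<phi>(1) that by (blast intro: P1_pts_nbhd_mem)
      then obtain y where "y \<in> nbhd A (ennreal e') \<phi>" "A x y < ennreal e" using \<phi>(2) by (auto simp: nbhd_def)
      with \<phi>(1) show ?thesis by (auto simp: U_def)
    qed
    then show "x \<in> nbhd A (ennreal e) (nbhd_filt A X)" by (simp add: F_def nbhd_filt_of_base)
  qed
  then have "nbhd A (ennreal e) (nbhd_filt A X) \<in> nbhd_filt A X" if "0 < e" for e
    using that by (auto simp: F_def filt_of_base_iff)
  moreover have "\<exists>e>0. nbhd A (ennreal e) (nbhd_filt A X) \<subseteq> g" if g: "g \<in> nbhd_filt A X" for g
  proof -
    obtain e where e: "0 < e" "U e \<subseteq> g" using g by (auto simp: F_def filt_of_base_iff)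
    have "nbhd A (ennreal (e / 2)) (nbhd_filt A X) \<subseteq> U e"
    proof
      fix x assume "x \<in> nbhd A (ennreal (e / 2)) (nbhd_filt A X)"
      then obtain z where z: "z \<in> U (e / 2)" "A x z < ennreal (e / 2)"
        using \<open>0 < e\<close> unfolding F_def nbhd_filt_of_base by (meson half_gt_zero mem_Collect_eq)
      then obtain \<phi> where "\<phi> \<in> X" "z \<in> nbhd A (ennreal (e / 2)) \<phi>" by (auto simp: U_def)
      moreover from this have "x \<in> nbhd A (ennreal (e / 2) + ennreal (e / 2)) \<phi>" using z(2) nbhd_trans by blast
      ultimately show "x \<in> U e" using \<open>0 < e\<close> by (auto simp: U_def simp flip: ennreal_plus)
    qed
    with e show ?thesis by (intro exI[of _ "e / 2"]) auto
  qed
  ultimately show ?thesis using filt by (simp add: P1_pts_iff)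
qed

lemma iso_map_nbhd_filt:
  assumes X: "X \<in> closed_subsets_bar A"
  shows "iso_map A (nbhd_filt A X) = X"
proof
  have Xc: "X \<subseteq> cauchy_pts A"
    and Xcl: "\<And>\<phi>. \<phi> \<in> cauchy_pts A \<Longrightarrow> (\<forall>r>0. \<exists>\<psi>\<in>X. Abar A \<phi> \<psi> < r) \<Longrightarrow> \<phi> \<in> X"
    using X by (auto simp: closed_subsets_bar_def closed_in_bar_def)
  show "X \<subseteq> iso_map A (nbhd_filt A X)"
  proof
    fix \<phi> assume "\<phi> \<in> X"
    then have \<phi>: "\<phi> \<in> P1_pts A" using Xc cauchy_pts_subset_P1_pts by blast
    have "nbhd_filt A X \<subseteq> \<phi>"
    proof
      fix g assume "g \<in> nbhd_filt A X"
      then obtain e where "0 < e" "(\<Union>\<psi>\<in>X. nbhd A (ennreal e) \<psi>) \<subseteq> g"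
        by (auto simp: nbhd_filt_def filt_of_base_iff)
      then have "nbhd A (ennreal e) \<phi> \<subseteq> g" using \<open>\<phi> \<in> X\<close> by blast
      then show "g \<in> \<phi>" using is_filt_upward[OF P1_pts_is_filt[OF \<phi>] P1_pts_nbhd_mem[OF \<phi> \<open>0 < e\<close>]] by blast
    qed
    then show "\<phi> \<in> iso_map A (nbhd_filt A X)" using \<open>\<phi> \<in> X\<close> Xc by (auto simp: iso_map_def)
  qed
  show "iso_map A (nbhd_filt A X) \<subseteq> X"
  proof
    fix \<phi> assume "\<phi> \<in> iso_map A (nbhd_filt A X)"
    then have \<phi>: "\<phi> \<in> cauchy_pts A" and sub: "nbhd_filt A X \<subseteq> \<phi>" by (auto simp: iso_map_def)
    have "\<exists>\<psi>\<in>X. Abar A \<phi> \<psi> < r" if "0 < r" for r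
    proof -
      obtain \<epsilon> where "0 < \<epsilon>" "ennreal \<epsilon> < r" using ennreal_ex_pos_less[OF \<open>0 < r\<close>] by blast
      have "(\<Union>\<psi>\<in>X. nbhd A (ennreal (\<epsilon> / 2)) \<psi>) \<in> nbhd_filt A X"
        unfolding nbhd_filt_def using \<open>0 < \<epsilon>\<close>
        by (intro base_in_filt_of_base[where B="\<lambda>e. \<Union>\<psi>\<in>X. nbhd A (ennreal e) \<psi>"]) simp
      then have "(\<Union>\<psi>\<in>X. nbhd A (ennreal (\<epsilon> / 2)) \<psi>) \<in> \<phi>" using sub by blast
      then obtain x h where x: "x \<in> (\<Union>\<psi>\<in>X. nbhd A (ennreal (\<epsilon> / 2)) \<psi>)"
        and h: "h \<in> \<phi>" "\<forall>u\<in>h. A u x < ennreal (\<epsilon> / 2)"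
        using cauchy_filt_centre[of \<phi> A _ "\<epsilon> / 2"] \<phi> \<open>0 < \<epsilon>\<close> unfolding cauchy_pts_iff by (meson half_gt_zero)
      then obtain \<psi> where "\<psi> \<in> X" "x \<in> nbhd A (ennreal (\<epsilon> / 2)) \<psi>" by blast
      have "Abar A \<phi> \<psi> \<le> ennreal (\<epsilon> / 2) + ennreal (\<epsilon> / 2)"
        using h \<open>x \<in> nbhd A (ennreal (\<epsilon> / 2)) \<psi>\<close> by (rule Abar_le_via_point)
      also have "\<dots> = ennreal \<epsilon>" using \<open>0 < \<epsilon>\<close> by (simp flip: ennreal_plus)
      also have "\<dots> < r" by fact
      finally show ?thesis using \<open>\<psi> \<in> X\<close> by blast
    qed
    with Xcl \<phi> show "\<phi> \<in> X" by blast
  qed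
qed

lemma haus_dist_iso_map_le_P1_dist:
  assumes F1: "F1 \<in> P1_pts A" and F2: "F2 \<in> P1_pts A"
  shows "haus_dist A (iso_map A F1) (iso_map A F2) \<le> P1_dist A F1 F2" (is "_ \<le> ?P")
proof (rule ennreal_le_epsilon)
  fix e :: real assume "?P < top" "0 < e"
  define \<eta> where "\<eta> = e / 3"
  have "0 < \<eta>" using \<open>0 < e\<close> by (simp add: \<eta>_def)
  show "haus_dist A (iso_map A F1) (iso_map A F2) \<le> ?P + ennreal e"
    unfolding haus_dist_def
  proof (rule SUP_least)
    fix \<phi> assume "\<phi> \<in> iso_map A F1"
    then have \<phi>: "\<phi> \<in> cauchy_pts A" "F1 \<subseteq> \<phi>" by (auto simp: iso_map_def)
    have "limsup_F F1 (Mminus A F2) < ?P + ennreal \<eta>"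
      using ennreal_less_add_pos[OF \<open>?P < top\<close> \<open>0 < \<eta>\<close>] by (simp add: P1_dist_eq_limsup_Mminus)
    then obtain f where f: "f \<in> F1" "(SUP x\<in>f. Mminus A F2 x) < ?P + ennreal \<eta>"
      unfolding limsup_F_def by (auto simp: INF_less_iff)
    obtain x h where x: "x \<in> f" and h: "h \<in> \<phi>" "\<forall>u\<in>h. A u x < ennreal \<eta>"
      using cauchy_filt_centre[of \<phi> A f \<eta>] \<phi> f(1) \<open>0 < \<eta>\<close> by (auto simp: cauchy_pts_iff)
    have "Mminus A F2 x < ?P + ennreal \<eta>" using le_less_trans[OF SUP_upper[OF x] f(2)] .
    then obtain \<psi> where \<psi>: "\<psi> \<in> iso_map A F2" "x \<in> nbhd A (?P + ennreal \<eta> + ennreal \<eta>) \<psi>"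
      using ex_cauchy_refinement_nbhd[OF F2 Mminus_less_imp_nbhd \<open>0 < \<eta>\<close>] by blast
    have "Abar A \<phi> \<psi> \<le> ennreal \<eta> + (?P + ennreal \<eta> + ennreal \<eta>)"
      using h \<psi>(2) by (rule Abar_le_via_point)
    also have "\<dots> = ?P + ennreal e"
      using \<open>0 < \<eta>\<close> by (simp add: \<eta>_def ac_simps flip: ennreal_plus)
    finally show "(INF \<psi>\<in>iso_map A F2. Abar A \<phi> \<psi>) \<le> ?P + ennreal e"
      by (rule INF_lower2[OF \<psi>(1)])
  qed
qed

lemma P1_dist_le_haus_dist_iso_map:
  assumes F1: "F1 \<in> P1_pts A" and F2: "F2 \<in> P1_pts A"
  shows "P1_dist A F1 F2 \<le> haus_dist A (iso_map A F1) (iso_map A F2)" (is "_ \<le> ?H")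
proof (rule ennreal_le_epsilon)
  fix e :: real assume "?H < top" "0 < e"
  define \<eta> where "\<eta> = e / 3"
  have "0 < \<eta>" using \<open>0 < e\<close> by (simp add: \<eta>_def)
  have "P1_dist A F1 F2 \<le> (SUP x\<in>nbhd A (ennreal \<eta>) F1. Mminus A F2 x)"
    unfolding P1_dist_eq_limsup_Mminus limsup_F_def
    by (rule INF_lower) (rule P1_pts_nbhd_mem[OF F1 \<open>0 < \<eta>\<close>])
  also have "\<dots> \<le> ?H + ennreal e"
  proof (rule SUP_least)
    fix x assume "x \<in> nbhd A (ennreal \<eta>) F1"
    then obtain \<phi> where \<phi>: "\<phi> \<in> iso_map A F1" "x \<in> nbhd A (ennreal \<eta> + ennreal \<eta>) \<phi>"
      using ex_cauchy_refinement_nbhd[OF F1 _ \<open>0 < \<eta>\<close>] by blast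
    have "(INF \<psi>\<in>iso_map A F2. Abar A \<phi> \<psi>) \<le> ?H"
      unfolding haus_dist_def using \<phi>(1) by (rule SUP_upper)
    also have "?H < ?H + ennreal \<eta>" using \<open>?H < top\<close> \<open>0 < \<eta>\<close> by (rule ennreal_less_add_pos)
    finally obtain \<psi> where \<psi>: "\<psi> \<in> iso_map A F2" "Abar A \<phi> \<psi> < ?H + ennreal \<eta>"
      by (auto simp: INF_less_iff)
    have "x \<in> nbhd A (ennreal \<eta> + ennreal \<eta> + (?H + ennreal \<eta>)) \<psi>"
      using \<phi>(2) \<psi>(2) by (rule nbhd_Abar_trans)
    also have "\<dots> \<subseteq> nbhd A (?H + ennreal e) F2"
      using \<psi>(1) \<open>0 < \<eta>\<close> by (intro nbhd_mono) (auto simp: iso_map_def \<eta>_def ac_simps simp flip: ennreal_plus)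
    finally show "Mminus A F2 x \<le> ?H + ennreal e" by (rule nbhd_imp_Mminus_le)
  qed
  finally show "P1_dist A F1 F2 \<le> ?H + ennreal e" .
qed

end

theorem mainTheorem18:
  fixes A :: "'a \<Rightarrow> 'a \<Rightarrow> ennreal"
  assumes "gen_metric A" and "symmetric_gm A"
  shows "bij_betw (iso_map A) (P1_pts A) (closed_subsets_bar A)
    \<and> (\<forall>F1\<in>P1_pts A. \<forall>F2\<in>P1_pts A.
          haus_dist A (iso_map A F1) (iso_map A F2) = P1_dist A F1 F2)"
proof -
  interpret sym_gen_metric A using assms by (rule sym_gen_metricI)
  have "iso_map A ` P1_pts A = closed_subsets_bar A"
  proof
    show "iso_map A ` P1_pts A \<subseteq> closed_subsets_bar A"
      using iso_map_nonempty closed_in_bar_iso_map by (auto simp: closed_subsets_bar_def)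
    show "closed_subsets_bar A \<subseteq> iso_map A ` P1_pts A"
    proof
      fix X assume X: "X \<in> closed_subsets_bar A"
      then have "X \<noteq> {}" "X \<subseteq> P1_pts A"
        using cauchy_pts_subset_P1_pts by (auto simp: closed_subsets_bar_def closed_in_bar_def)
      then have "nbhd_filt A X \<in> P1_pts A" by (rule nbhd_filt_in_P1_pts)
      with iso_map_nbhd_filt[OF X] show "X \<in> iso_map A ` P1_pts A" by (metis image_eqI)
    qed
  qed
  then show ?thesis
    using inj_on_iso_map haus_dist_iso_map_le_P1_dist P1_dist_le_haus_dist_iso_map
    by (auto simp: bij_betw_def intro: antisym)
qed

end
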